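(* Let $f,g:\mathbb{N}\to\mathbb{C}$ be functions, neither identically zero, such that \[ g(n)=\sum_{k=1}^{n}\binom{n-1}{k-1} f(k)\quad\text{for all } n\in\mathbb{N}. \] Then at least one of $\{n: f(n)\neq 0\}$ and $\{n: g(n)\neq 0\}$ is infinite. *)

theory Defs
  imports Complex_Main
begin

end

theory Submission
  imports Defs
begin

text \<open>Shifting indices, g(m+1) is the binomial transform of a(j) = f(j+1), which for finitely
  supported a is a polynomial in m of degree max{j. a j \<noteq> 0}. Such a polynomial cannot vanish
  for all large m: the forward difference of the binomial transform is the binomial transform of
  the shifted sequence, so induction on the degree reduces to a nonzero constant.\<close>

definition binomial_transform :: "(nat \<Rightarrow> 'a::comm_semiring_1) \<Rightarrow> nat \<Rightarrow> 'a" where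
  "binomial_transform a m = (\<Sum>j\<le>m. of_nat (m choose j) * a j)"

lemma binomial_transform_Suc:
  "binomial_transform a (Suc m) = binomial_transform a m + binomial_transform (\<lambda>j. a (Suc j)) m"
proof -
  have "binomial_transform a m = a 0 + (\<Sum>j\<le>m. of_nat (m choose Suc j) * a (Suc j))"
  proof -
    have "binomial_transform a m = (\<Sum>j\<le>Suc m. of_nat (m choose j) * a j)"
      by (simp add: binomial_transform_def sum.atMost_Suc binomial_eq_0)
    also have "\<dots> = a 0 + (\<Sum>j\<le>m. of_nat (m choose Suc j) * a (Suc j))"
      by (subst sum.atMost_Suc_shift) simp
    finally show ?thesis .
  qed
  moreover have "binomial_transform a (Suc m) = a 0 + (\<Sum>j\<le>m. of_nat (Suc m choose Suc j) * a (Suc j))"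
    unfolding binomial_transform_def by (subst sum.atMost_Suc_shift) simp
  ultimately show ?thesis
    by (simp add: binomial_transform_def binomial_Suc_Suc sum.distrib distrib_right add_ac)
qed

lemma binomial_transform_const:
  assumes "\<forall>j>0. a j = 0"
  shows "binomial_transform a m = a 0"
  unfolding binomial_transform_def using assms by (subst sum.atMost_shift) simp

lemma binomial_transform_not_eventually_zero:
  fixes a :: "nat \<Rightarrow> 'a::comm_ring_1"
  assumes "a N \<noteq> 0" and "\<forall>j>N. a j = 0"
  shows "\<not> (\<forall>\<^sub>F m in sequentially. binomial_transform a m = 0)"
  using assms
proof (induction N arbitrary: a)
  case 0
  then show ?case by (simp add: binomial_transform_const)
next
  case (Suc N)
  have shift_not_eventually_zero:
    "\<not> (\<forall>\<^sub>F m in sequentially. binomial_transform (\<lambda>j. a (Suc j)) m = 0)"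
    using Suc.IH[of "\<lambda>j. a (Suc j)"] Suc.prems by simp
  show ?case
  proof
    assume "\<forall>\<^sub>F m in sequentially. binomial_transform a m = 0"
    then have "\<forall>\<^sub>F m in sequentially. binomial_transform a m = 0 \<and> binomial_transform a (Suc m) = 0"
      using eventually_sequentially_Suc[of "\<lambda>m. binomial_transform a m = 0"]
      by (simp add: eventually_conj_iff)
    then have "\<forall>\<^sub>F m in sequentially. binomial_transform (\<lambda>j. a (Suc j)) m = 0"
      by (rule eventually_mono) (auto simp: binomial_transform_Suc)
    with shift_not_eventually_zero show False ..
  qed
qed

lemma infinite_binomial_transform_support:
  fixes a :: "nat \<Rightarrow> 'a::comm_ring_1"
  assumes finite: "finite {j. a j \<noteq> 0}" and nonzero: "\<exists>j. a j \<noteq> 0"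
  shows "infinite {m. binomial_transform a m \<noteq> 0}"
proof
  assume "finite {m. binomial_transform a m \<noteq> 0}"
  then have "\<forall>\<^sub>F m in sequentially. binomial_transform a m = 0"
    by (simp add: cofinite_eq_sequentially[symmetric] eventually_cofinite)
  moreover define N where "N = Max {j. a j \<noteq> 0}"
  have "a N \<noteq> 0"
    using Max_in[OF finite] nonzero by (auto simp: N_def)
  moreover have "\<forall>j>N. a j = 0"
    using Max_ge[OF finite] by (force simp: N_def)
  ultimately show False
    using binomial_transform_not_eventually_zero by blast
qed

lemma sum_choose_pred_eq_binomial_transform:
  "(\<Sum>k=1..Suc m. of_nat (m choose (k - 1)) * f k) = binomial_transform (\<lambda>j. f (Suc j)) m"
  unfolding One_nat_def sum.shift_bounds_cl_Suc_ivl
  by (simp add: binomial_transform_def atLeast0AtMost)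

lemma Collect_ge_1_eq_image_Suc: "{n. n \<ge> 1 \<and> P n} = Suc ` {m. P (Suc m)}"
  by (auto simp: image_iff Suc_le_eq gr0_conv_Suc)

theorem proposition5p1:
  fixes f g :: "nat \<Rightarrow> complex"
  assumes f_nz: "\<exists>n\<ge>1. f n \<noteq> 0"
    and g_nz: "\<exists>n\<ge>1. g n \<noteq> 0"
    and rel: "\<And>n. n \<ge> 1 \<Longrightarrow> g n = (\<Sum>k=1..n. of_nat ((n - 1) choose (k - 1)) * f k)"
  shows "infinite {n. n \<ge> 1 \<and> f n \<noteq> 0} \<or> infinite {n. n \<ge> 1 \<and> g n \<noteq> 0}"
proof -
  define a where "a j = f (Suc j)" for j
  have f_support: "{n. n \<ge> 1 \<and> f n \<noteq> 0} = Suc ` {j. a j \<noteq> 0}"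
    unfolding a_def by (rule Collect_ge_1_eq_image_Suc)
  have "g (Suc m) = binomial_transform a m" for m
    using rel[of "Suc m"] unfolding a_def sum_choose_pred_eq_binomial_transform[symmetric] by simp
  then have g_support: "{n. n \<ge> 1 \<and> g n \<noteq> 0} = Suc ` {m. binomial_transform a m \<noteq> 0}"
    unfolding Collect_ge_1_eq_image_Suc by simp
  have "\<exists>j. a j \<noteq> 0"
    using f_nz f_support by blast
  then show ?thesis
    unfolding f_support g_support
    using infinite_binomial_transform_support[of a] by (simp add: finite_image_iff)
qed

end
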